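(* Let $(A,\cdot,[-,-])$ be a transposed Poisson algebra and let $\mathcal B$ be a nondegenerate symmetric bilinear form on $A$ which is invariant on $(A,\cdot)$ (i.e. $\mathcal B(x\cdot y,z)=\mathcal B(x,y\cdot z)$ for all $x,y,z$) and is a commutative 2-cocycle on $(A,[-,-])$. Define $\circ$ on $A$ by $\mathcal B(x\circ y,z)=\mathcal B(y,[x,z])$ for all $x,y,z\in A$. Then $(A,\cdot,\circ)$ is an anti-pre-Lie Poisson algebra.
   Context: All vector spaces are finite-dimensional over a field $\mathbb F$ of characteristic $0$. A transposed Poisson algebra is $(A,\cdot,[-,-])$ with $(A,\cdot)$ commutative associative, $(A,[-,-])$ a Lie algebra, and $2z\cdot[x,y]=[z\cdot x,y]+[x,z\cdot y]$ for all $x,y,z$. A commutative 2-cocycle on a Lie algebra is a symmetric bilinear form with $\mathcal B([x,y],z)+\mathcal B([y,z],x)+\mathcal B([z,x],y)=0$. For a bilinear operation $\circ$ write $[x,y]_\circ=x\circ y-y\circ x$; an anti-pre-Lie algebra is $(A,\circ)$ with $x\circ(y\circ z)-y\circ(x\circ z)=[y,x]_\circ\circ z$ and $[x,y]_\circ\circ z+[y,z]_\circ\circ x+[z,x]_\circ\circ y=0$. An anti-pre-Lie Poisson algebra is $(A,\cdot,\circ)$ with $(A,\cdot)$ commutative associative, $(A,\circ)$ anti-pre-Lie, and $2(x\circ y)\cdot z-2(y\circ x)\cdot z=y\cdot(x\circ z)-x\cdot(y\circ z)$, $2x\circ(y\cdot z)=(z\cdot x)\circ y+z\cdot(x\circ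 y)$ for all $x,y,z$. *)

theory Defs
  imports Main "HOL.Vector_Spaces"
begin

definition bilinear_op :: "('k::field \<Rightarrow> 'v::ab_group_add \<Rightarrow> 'v) \<Rightarrow> ('v \<Rightarrow> 'v \<Rightarrow> 'v) \<Rightarrow> bool" where
  "bilinear_op scale f \<longleftrightarrow>
     (\<forall>x y z. f (x + y) z = f x z + f y z) \<and>
     (\<forall>x y z. f x (y + z) = f x y + f x z) \<and>
     (\<forall>a x y. f (scale a x) y = scale a (f x y)) \<and>
     (\<forall>a x y. f x (scale a y) = scale a (f x y))"

definition bilinear_form :: "('k::field \<Rightarrow> 'v::ab_group_add \<Rightarrow> 'v) \<Rightarrow> ('v \<Rightarrow> 'v \<Rightarrow> 'k) \<Rightarrow> bool" where
  "bilinear_form scale B \<longleftrightarrow>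
     (\<forall>x y z. B (x + y) z = B x z + B y z) \<and>
     (\<forall>x y z. B x (y + z) = B x y + B x z) \<and>
     (\<forall>a x y. B (scale a x) y = a * B x y) \<and>
     (\<forall>a x y. B x (scale a y) = a * B x y)"

definition symmetric_form :: "('v \<Rightarrow> 'v \<Rightarrow> 'k) \<Rightarrow> bool" where
  "symmetric_form B \<longleftrightarrow> (\<forall>x y. B x y = B y x)"

definition nondegenerate_form :: "('v::zero \<Rightarrow> 'v \<Rightarrow> 'k::zero) \<Rightarrow> bool" where
  "nondegenerate_form B \<longleftrightarrow> (\<forall>x. (\<forall>y. B x y = 0) \<longrightarrow> x = 0)"

definition invariant_form :: "('v \<Rightarrow> 'v \<Rightarrow> 'v) \<Rightarrow> ('v \<Rightarrow> 'v \<Rightarrow> 'k) \<Rightarrow> bool" where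
  "invariant_form mult B \<longleftrightarrow> (\<forall>x y z. B (mult x y) z = B x (mult y z))"

definition comm_2_cocycle :: "('v \<Rightarrow> 'v \<Rightarrow> 'v) \<Rightarrow> ('v \<Rightarrow> 'v \<Rightarrow> 'k::ab_group_add) \<Rightarrow> bool" where
  "comm_2_cocycle br B \<longleftrightarrow> symmetric_form B \<and>
     (\<forall>x y z. B (br x y) z + B (br y z) x + B (br z x) y = 0)"

definition comm_assoc_algebra :: "('k::field \<Rightarrow> 'v::ab_group_add \<Rightarrow> 'v) \<Rightarrow> ('v \<Rightarrow> 'v \<Rightarrow> 'v) \<Rightarrow> bool" where
  "comm_assoc_algebra scale mult \<longleftrightarrow> bilinear_op scale mult \<and>
     (\<forall>x y. mult x y = mult y x) \<and>
     (\<forall>x y z. mult (mult x y) z = mult x (mult y z))"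

definition lie_algebra :: "('k::field \<Rightarrow> 'v::ab_group_add \<Rightarrow> 'v) \<Rightarrow> ('v \<Rightarrow> 'v \<Rightarrow> 'v) \<Rightarrow> bool" where
  "lie_algebra scale br \<longleftrightarrow> bilinear_op scale br \<and>
     (\<forall>x. br x x = 0) \<and>
     (\<forall>x y z. br x (br y z) + br y (br z x) + br z (br x y) = 0)"

definition transposed_poisson :: "('k::field \<Rightarrow> 'v::ab_group_add \<Rightarrow> 'v) \<Rightarrow> ('v \<Rightarrow> 'v \<Rightarrow> 'v) \<Rightarrow> ('v \<Rightarrow> 'v \<Rightarrow> 'v) \<Rightarrow> bool" where
  "transposed_poisson scale mult br \<longleftrightarrow> comm_assoc_algebra scale mult \<and> lie_algebra scale br \<and>
     (\<forall>x y z. scale 2 (mult z (br x y)) = br (mult z x) y + br x (mult z y))"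

definition commutator :: "('v \<Rightarrow> 'v \<Rightarrow> 'v::ab_group_add) \<Rightarrow> 'v \<Rightarrow> 'v \<Rightarrow> 'v" where
  "commutator circ x y = circ x y - circ y x"

definition anti_pre_lie :: "('k::field \<Rightarrow> 'v::ab_group_add \<Rightarrow> 'v) \<Rightarrow> ('v \<Rightarrow> 'v \<Rightarrow> 'v) \<Rightarrow> bool" where
  "anti_pre_lie scale circ \<longleftrightarrow> bilinear_op scale circ \<and>
     (\<forall>x y z. circ x (circ y z) - circ y (circ x z) = circ (commutator circ y x) z) \<and>
     (\<forall>x y z. circ (commutator circ x y) z + circ (commutator circ y z) x
              + circ (commutator circ z x) y = 0)"

definition anti_pre_lie_poisson :: "('k::field \<Rightarrow> 'v::ab_group_add \<Rightarrow> 'v) \<Rightarrow> ('v \<Rightarrow> 'v \<Rightarrow> 'v) \<Rightarrow> ('v \<Rightarrow> 'v \<Rightarrow> 'v) \<Rightarrow> bool" where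
  "anti_pre_lie_poisson scale mult circ \<longleftrightarrow> comm_assoc_algebra scale mult \<and> anti_pre_lie scale circ \<and>
     (\<forall>x y z. scale 2 (mult (circ x y) z) - scale 2 (mult (circ y x) z)
              = mult y (circ x z) - mult x (circ y z)) \<and>
     (\<forall>x y z. scale 2 (circ x (mult y z)) = circ (mult z x) y + mult z (circ x y))"

end

theory Submission
  imports Defs
begin

text \<open>Nondegeneracy makes \<open>x \<circ> -\<close> the \<open>B\<close>-adjoint of \<open>ad x\<close>, so every identity for \<open>\<circ>\<close>
is checked after pairing with \<open>B\<close>. The cocycle condition turns \<open>x \<circ> y - y \<circ> x\<close> into
\<open>[x, y]\<close>, and the Jacobi identity for the adjoints gives the first anti-pre-Lie axiom. The
cyclic axiom reduces to the vanishing of the cyclic sum over \<open>x, y, z\<close> of \<open>B(z, [[x, y], w])\<close>: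
evaluating this sum with the cocycle identity, once directly and once after expanding
\<open>[[x, y], w]\<close> by the Jacobi identity, gives the cyclic sum of \<open>B([x, y], [z, w])\<close> and its
negative, so it is 0 in characteristic 0. The two Poisson compatibilities follow from
invariance of \<open>B\<close>, the transposed Leibniz rule and its consequence \<open>x \<cdot> [y, z] + y \<cdot> [z, x] + z \<cdot> [x, y] = 0\<close>.\<close>

lemma bilinear_op_additive:
  assumes "bilinear_op scale f"
  shows "additive (\<lambda>x. f x y)" and "additive (f x)"
  using assms unfolding bilinear_op_def additive_def by blast+

lemma bilinear_form_additive:
  assumes "bilinear_form scale B"
  shows "additive (\<lambda>x. B x y)" and "additive (B x)"
  using assms unfolding bilinear_form_def additive_def by blast+

locale lie_algebra_bracket =
  fixes scale :: "'k::field \<Rightarrow> 'v::ab_group_add \<Rightarrow> 'v"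
    and br :: "'v \<Rightarrow> 'v \<Rightarrow> 'v"
  assumes lie: "lie_algebra scale br"
begin

lemma bracket_bilinear: "bilinear_op scale br"
  using lie unfolding lie_algebra_def by blast

lemma bracket_add_left: "br (x + y) z = br x z + br y z"
  and bracket_add_right: "br x (y + z) = br x y + br x z"
  and bracket_scale_left: "br (scale a x) y = scale a (br x y)"
  using bracket_bilinear unfolding bilinear_op_def by blast+

lemmas bracket_minus_left [simp] = additive.minus[OF bilinear_op_additive(1)[OF bracket_bilinear]]

lemma bracket_self: "br x x = 0"
  using lie unfolding lie_algebra_def by blast

lemma jacobi: "br x (br y z) + br y (br z x) + br z (br x y) = 0"
  using lie unfolding lie_algebra_def by blast

lemma bracket_antisym: "br y x = - br x y"
proof -
  have "br (x + y) (x + y) = br x y + br y x"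
    using bracket_self[of x] bracket_self[of y] by (simp add: bracket_add_left bracket_add_right)
  then have "br x y + br y x = 0" by (simp add: bracket_self)
  then show ?thesis by (simp add: add_eq_0_iff)
qed

lemma bracket_cyclic_right: "br (br x y) z + br (br y z) x + br (br z x) y = 0"
proof -
  have "br (br x y) z + br (br y z) x + br (br z x) y = - (br x (br y z) + br y (br z x) + br z (br x y))"
    by (simp add: bracket_antisym[of "br _ _"] algebra_simps)
  also have "\<dots> = 0" by (simp only: jacobi minus_zero)
  finally show ?thesis .
qed

lemma bracket_right_derivation: "br (br x y) w = br (br x w) y + br x (br y w)"
proof -
  have "br w (br x y) = - br (br x y) w" by (rule bracket_antisym)
  moreover have "br y (br w x) = br (br x w) y"
    by (metis bracket_antisym bracket_minus_left minus_minus)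
  moreover have "br w (br x y) + br x (br y w) + br y (br w x) = 0" by (rule jacobi)
  ultimately show ?thesis by (simp add: algebra_simps)
qed

end

locale comm_2_cocycle_form = lie_algebra_bracket scale br
  for scale :: "'k::field_char_0 \<Rightarrow> 'v::ab_group_add \<Rightarrow> 'v" and br +
  fixes B :: "'v \<Rightarrow> 'v \<Rightarrow> 'k"
  assumes bilinear: "bilinear_form scale B"
    and cocycle: "comm_2_cocycle br B"
begin

lemma form_add_left: "B (x + y) z = B x z + B y z"
  and form_add_right: "B x (y + z) = B x y + B x z"
  and form_scale_left: "B (scale a x) y = a * B x y"
  and form_scale_right: "B x (scale a y) = a * B x y"
  using bilinear unfolding bilinear_form_def by blast+

lemmas form_zero_left = additive.zero[OF bilinear_form_additive(1)[OF bilinear]]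
lemmas form_zero_right = additive.zero[OF bilinear_form_additive(2)[OF bilinear]]
lemmas form_minus_left [simp] = additive.minus[OF bilinear_form_additive(1)[OF bilinear]]
lemmas form_minus_right [simp] = additive.minus[OF bilinear_form_additive(2)[OF bilinear]]
lemmas form_diff_left = additive.diff[OF bilinear_form_additive(1)[OF bilinear]]
lemmas form_diff_right = additive.diff[OF bilinear_form_additive(2)[OF bilinear]]

lemma form_symmetric: "B x y = B y x"
  using cocycle unfolding comm_2_cocycle_def symmetric_form_def by blast

lemma cocycle_cyclic: "B (br x y) z + B (br y z) x + B (br z x) y = 0"
  using cocycle unfolding comm_2_cocycle_def by blast

lemma form_bracket_left: "B (br x y) z = B y (br x z) - B x (br y z)"
proof -
  have "B (br y z) x = B x (br y z)" by (rule form_symmetric)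
  moreover have "B (br z x) y = - B y (br x z)"
    by (metis bracket_antisym form_minus_left form_symmetric)
  moreover have "B (br x y) z + B (br y z) x + B (br z x) y = 0" by (rule cocycle_cyclic)
  ultimately show ?thesis by (simp add: algebra_simps)
qed

lemma form_double_bracket_cyclic:
  "B z (br (br x y) w) + B x (br (br y z) w) + B y (br (br z x) w) = 0"
proof -
  let ?S = "B (br (br x y) w) z + B (br (br y z) w) x + B (br (br z x) w) y"
  let ?T = "B (br x y) (br z w) + B (br y z) (br x w) + B (br z x) (br y w)"
  have "?S = ?T"
  proof -
    have expand: "B (br (br a b) w) c = B w (br (br a b) c) + B (br a b) (br c w)" for a b c
      using form_bracket_left[of "br a b" w c] by (simp add: bracket_antisym[of w c])
    have "?S = B w (br (br x y) z + br (br y z) x + br (br z x) y) + ?T"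
      by (simp add: expand form_add_right algebra_simps)
    then show ?thesis by (simp add: bracket_cyclic_right form_zero_right)
  qed
  moreover have "?S = - ?T"
  proof -
    have expand: "B (br (br a w) b) c = - B (br b c) (br a w) - B (br c (br a w)) b" for a b c
      using cocycle_cyclic[of "br a w" b c] by (simp add: eq_neg_iff_add_eq_0 algebra_simps)
    show ?thesis
      by (simp add: bracket_right_derivation[of x y w] bracket_right_derivation[of y z w]
          bracket_right_derivation[of z x w] form_add_left expand)
  qed
  ultimately have "?S = 0" by (metis add_eq_0_iff mult_2 mult_eq_0_iff zero_neq_numeral)
  then show ?thesis by (simp add: form_symmetric)
qed

end

locale comm_2_cocycle_adjoint = comm_2_cocycle_form +
  fixes circ
  assumes nondegenerate: "nondegenerate_form B"
    and circ_adjoint: "B (circ x y) z = B y (br x z)"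
begin

lemma form_eqI:
  assumes "\<And>w. B u w = B v w"
  shows "u = v"
proof -
  have "B (u - v) w = 0" for w by (simp add: form_diff_left assms)
  then have "u - v = 0" using nondegenerate unfolding nondegenerate_form_def by blast
  then show ?thesis by simp
qed

lemma bilinear_op_circ: "bilinear_op scale circ"
  unfolding bilinear_op_def
  by (intro conjI allI; rule form_eqI)
    (simp_all add: circ_adjoint form_add_left form_add_right form_scale_left form_scale_right
      bracket_add_left bracket_scale_left)

lemma commutator_circ: "commutator circ x y = br x y"
  by (rule form_eqI) (simp add: commutator_def form_diff_left circ_adjoint form_bracket_left)

lemma circ_circ_diff: "circ x (circ y z) - circ y (circ x z) = circ (commutator circ y x) z"
proof (rule form_eqI)
  fix w
  have "br y (br x w) - br x (br y w) = br (br y x) w"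
    by (simp add: bracket_right_derivation[of y x w] bracket_antisym[of "br y w" x])
  then show "B (circ x (circ y z) - circ y (circ x z)) w = B (circ (commutator circ y x) z) w"
    by (simp add: form_diff_left circ_adjoint commutator_circ form_diff_right[symmetric])
qed

lemma circ_commutator_cyclic:
  "circ (commutator circ x y) z + circ (commutator circ y z) x + circ (commutator circ z x) y = 0"
  by (rule form_eqI)
    (simp add: form_add_left circ_adjoint commutator_circ form_double_bracket_cyclic form_zero_left)

lemma anti_pre_lie_circ: "anti_pre_lie scale circ"
  unfolding anti_pre_lie_def
  using bilinear_op_circ circ_circ_diff circ_commutator_cyclic by blast

end

locale transposed_poisson_algebra = vector_space scale
  for scale :: "'k::field_char_0 \<Rightarrow> 'v::ab_group_add \<Rightarrow> 'v" +
  fixes mult br :: "'v \<Rightarrow> 'v \<Rightarrow> 'v"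
  assumes transposed_poisson: "transposed_poisson scale mult br"
begin

sublocale lie_algebra_bracket scale br
  using transposed_poisson by unfold_locales (simp add: transposed_poisson_def)

lemma comm_assoc: "comm_assoc_algebra scale mult"
  using transposed_poisson unfolding transposed_poisson_def by blast

lemma mult_commute: "mult x y = mult y x"
  using comm_assoc unfolding comm_assoc_algebra_def by blast

lemma mult_bilinear: "bilinear_op scale mult"
  using comm_assoc unfolding comm_assoc_algebra_def by blast

lemmas mult_diff_left = additive.diff[OF bilinear_op_additive(1)[OF mult_bilinear]]
lemmas mult_minus_right = additive.minus[OF bilinear_op_additive(2)[OF mult_bilinear]]

lemma transposed_leibniz: "scale 2 (mult z (br x y)) = br (mult z x) y + br x (mult z y)"
  using transposed_poisson unfolding transposed_poisson_def by blast

lemma mult_bracket_cyclic: "mult x (br y z) + mult y (br z x) + mult z (br x y) = 0"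
proof -
  have "scale 2 (mult x (br y z) + mult y (br z x) + mult z (br x y))
      = br (mult x y) z + br y (mult x z) + (br (mult y z) x + br z (mult y x))
        + (br (mult z x) y + br x (mult z y))"
    by (simp add: scale_right_distrib transposed_leibniz)
  also have "\<dots> = 0"
  proof -
    have "br z (mult y x) = - br (mult x y) z" "br x (mult z y) = - br (mult y z) x"
      "br y (mult x z) = - br (mult z x) y"
      by (metis bracket_antisym mult_commute)+
    then show ?thesis by simp
  qed
  finally show ?thesis by simp
qed

lemma bracket_mult_diff: "br x (mult y w) - br y (mult x w) = scale 2 (mult w (br x y))"
proof -
  have "br x (mult y w) - br y (mult x w) = scale 2 (mult y (br x w)) - scale 2 (mult x (br y w))"
    by (simp add: transposed_leibniz mult_commute[of y x])
  also have "\<dots> = scale 2 (mult w (br x y))"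
  proof -
    have "mult w (br x y) + mult x (br y w) - mult y (br x w) = 0"
      using mult_bracket_cyclic[of w x y] by (simp add: bracket_antisym[of x w] mult_minus_right)
    then have "mult y (br x w) - mult x (br y w) = mult w (br x y)"
      by (simp add: algebra_simps)
    then show ?thesis by (simp add: scale_right_diff_distrib[symmetric])
  qed
  finally show ?thesis .
qed

end

locale transposed_poisson_invariant_form =
  transposed_poisson_algebra scale mult br + comm_2_cocycle_adjoint scale br B circ
  for scale :: "'k::field_char_0 \<Rightarrow> 'v::ab_group_add \<Rightarrow> 'v" and mult br B circ +
  assumes invariant: "invariant_form mult B"
begin

lemma form_mult_swap: "B (mult x y) z = B y (mult x z)"
  using invariant unfolding invariant_form_def by (metis mult_commute)

lemma mult_circ_compatible:
  "scale 2 (mult (circ x y) z) - scale 2 (mult (circ y x) z) = mult y (circ x z) - mult x (circ y z)"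
proof (rule form_eqI)
  fix w
  have "scale 2 (mult (circ x y) z) - scale 2 (mult (circ y x) z) = scale 2 (mult z (br x y))"
    using commutator_circ[of x y]
    by (simp add: scale_right_diff_distrib[symmetric] mult_diff_left[symmetric] commutator_def
        mult_commute[of "br x y" z])
  moreover have "B (mult y (circ x z) - mult x (circ y z)) w = B z (br x (mult y w) - br y (mult x w))"
    by (simp add: form_diff_left form_diff_right form_mult_swap circ_adjoint)
  ultimately show "B (scale 2 (mult (circ x y) z) - scale 2 (mult (circ y x) z)) w
      = B (mult y (circ x z) - mult x (circ y z)) w"
    by (simp add: bracket_mult_diff form_scale_left form_scale_right form_mult_swap
        form_symmetric[of z] mult_commute[of w z])
qed

lemma circ_mult_compatible: "scale 2 (circ x (mult y z)) = circ (mult z x) y + mult z (circ x y)"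
proof (rule form_eqI)
  fix w
  have "B (circ (mult z x) y + mult z (circ x y)) w = B y (br (mult z x) w + br x (mult z w))"
    by (simp add: form_add_left form_add_right form_mult_swap circ_adjoint)
  also have "\<dots> = B (scale 2 (circ x (mult y z))) w"
    by (simp add: transposed_leibniz[symmetric] form_scale_left form_scale_right circ_adjoint
        form_mult_swap mult_commute[of y z])
  finally show "B (scale 2 (circ x (mult y z))) w = B (circ (mult z x) y + mult z (circ x y)) w"
    by simp
qed

theorem anti_pre_lie_poisson_circ: "anti_pre_lie_poisson scale mult circ"
  unfolding anti_pre_lie_poisson_def
  using comm_assoc anti_pre_lie_circ mult_circ_compatible circ_mult_compatible by blast

end

theorem proposition3p46:
  fixes scale :: "'k::field_char_0 \<Rightarrow> 'v::ab_group_add \<Rightarrow> 'v"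
    and Basis :: "'v set"
    and mult br circ :: "'v \<Rightarrow> 'v \<Rightarrow> 'v"
    and B :: "'v \<Rightarrow> 'v \<Rightarrow> 'k"
  assumes "finite_dimensional_vector_space scale Basis"
    and "transposed_poisson scale mult br"
    and "bilinear_form scale B"
    and "symmetric_form B"
    and "nondegenerate_form B"
    and "invariant_form mult B"
    and "comm_2_cocycle br B"
    and "\<forall>x y z. B (circ x y) z = B y (br x z)"
  shows "anti_pre_lie_poisson scale mult circ"
proof -
  interpret vector_space scale
    using assms(1) by (rule finite_dimensional_vector_space.axioms(1))
  interpret transposed_poisson_invariant_form scale mult br B circ
    \<comment> \<open>symmetry of \<open>B\<close> is already part of \<open>comm_2_cocycle\<close>\<close>
    using assms(2,3,5-8) by unfold_locales (auto simp: transposed_poisson_def)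
  show ?thesis by (rule anti_pre_lie_poisson_circ)
qed

end
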